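(* Let $M$ be a strong module of a dually-CPT poset $\mathbf{P}=(X,P)$ and let $\{W_x\}_{x\in X}$ be a CPT representation of $\mathbf{P}$ on a host tree $T$ in which all the paths $W_m$, $m\in M$, arrive at (have an endpoint at) a common vertex $a$ of $T$. If no element of $\mathbf{P}$ is greater than all elements of $M$, then there exists a CPT representation of $\mathbf{P}$ in which the paths representing the elements of $M$ all have different endpoints.
   Context: A CPT representation of $\mathbf{P}$ assigns to each $x\in X$ a path $W_x$ of a host tree $T$ with $x<y$ iff $W_x\subsetneq W_y$; $\mathbf{P}$ is dually-CPT if $\mathbf{P}$ and its dual both have such representations. A module is a set $M\subseteq X$ such that each $y\notin M$ is comparable to all or none of the elements of $M$; it is strong if for every module $M'$, $M\cap M'=\emptyset$, $M\subseteq M'$ or $M'\subseteq M$. *)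

theory Defs
  imports Main
begin

definition poset :: "'a set \<Rightarrow> ('a \<Rightarrow> 'a \<Rightarrow> bool) \<Rightarrow> bool" where
  "poset X lt \<longleftrightarrow> finite X \<and> (\<forall>x\<in>X. \<not> lt x x)
     \<and> (\<forall>x\<in>X. \<forall>y\<in>X. \<forall>z\<in>X. lt x y \<and> lt y z \<longrightarrow> lt x z)"

definition comparable :: "('a \<Rightarrow> 'a \<Rightarrow> bool) \<Rightarrow> 'a \<Rightarrow> 'a \<Rightarrow> bool" where
  "comparable lt x y \<longleftrightarrow> lt x y \<or> lt y x"

definition is_path :: "('v \<Rightarrow> 'v \<Rightarrow> bool) \<Rightarrow> 'v list \<Rightarrow> bool" where
  "is_path E xs \<longleftrightarrow> xs \<noteq> [] \<and> distinct xs \<and> (\<forall>i. Suc i < length xs \<longrightarrow> E (xs ! i) (xs ! Suc i))"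

definition tree :: "'v set \<Rightarrow> ('v \<Rightarrow> 'v \<Rightarrow> bool) \<Rightarrow> bool" where
  "tree V E \<longleftrightarrow> finite V \<and> V \<noteq> {}
     \<and> (\<forall>u v. E u v \<longrightarrow> u \<in> V \<and> v \<in> V)
     \<and> (\<forall>u v. E u v \<longrightarrow> E v u) \<and> (\<forall>u. \<not> E u u)
     \<and> (\<forall>u\<in>V. \<forall>v\<in>V. \<exists>!xs. is_path E xs \<and> hd xs = u \<and> last xs = v)"

definition tree_path :: "'v set \<Rightarrow> ('v \<Rightarrow> 'v \<Rightarrow> bool) \<Rightarrow> 'v set \<Rightarrow> bool" where
  "tree_path V E W \<longleftrightarrow> (\<exists>xs. is_path E xs \<and> set xs \<subseteq> V \<and> set xs = W)"

definition endpoint :: "('v \<Rightarrow> 'v \<Rightarrow> bool) \<Rightarrow> 'v \<Rightarrow> 'v set \<Rightarrow> bool" where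
  "endpoint E v W \<longleftrightarrow> (\<exists>xs. is_path E xs \<and> set xs = W \<and> (v = hd xs \<or> v = last xs))"

definition cpt_rep :: "'a set \<Rightarrow> ('a \<Rightarrow> 'a \<Rightarrow> bool) \<Rightarrow> 'v set \<Rightarrow> ('v \<Rightarrow> 'v \<Rightarrow> bool) \<Rightarrow> ('a \<Rightarrow> 'v set) \<Rightarrow> bool" where
  "cpt_rep X lt V E W \<longleftrightarrow> tree V E \<and> (\<forall>x\<in>X. tree_path V E (W x))
     \<and> (\<forall>x\<in>X. \<forall>y\<in>X. lt x y \<longleftrightarrow> W x \<subset> W y)"

text \<open>Host trees are finite, so WLOG their vertices are natural numbers.\<close>
definition is_CPT :: "'a set \<Rightarrow> ('a \<Rightarrow> 'a \<Rightarrow> bool) \<Rightarrow> bool" where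
  "is_CPT X lt \<longleftrightarrow> (\<exists>(V :: nat set) E W. cpt_rep X lt V E W)"

definition dually_CPT :: "'a set \<Rightarrow> ('a \<Rightarrow> 'a \<Rightarrow> bool) \<Rightarrow> bool" where
  "dually_CPT X lt \<longleftrightarrow> is_CPT X lt \<and> is_CPT X (\<lambda>x y. lt y x)"

definition module :: "'a set \<Rightarrow> ('a \<Rightarrow> 'a \<Rightarrow> bool) \<Rightarrow> 'a set \<Rightarrow> bool" where
  "module X lt M \<longleftrightarrow> M \<subseteq> X \<and>
     (\<forall>y\<in>X - M. (\<forall>m\<in>M. comparable lt y m) \<or> (\<forall>m\<in>M. \<not> comparable lt y m))"

definition strong_module :: "'a set \<Rightarrow> ('a \<Rightarrow> 'a \<Rightarrow> bool) \<Rightarrow> 'a set \<Rightarrow> bool" where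
  "strong_module X lt M \<longleftrightarrow> module X lt M \<and>
     (\<forall>M'. module X lt M' \<longrightarrow> M \<inter> M' = {} \<or> M \<subseteq> M' \<or> M' \<subseteq> M)"

end

theory Submission
  imports Defs "HOL-Library.Sublist" "HOL-Library.List_Lexorder" "HOL-Library.Product_Lexorder"
begin

text \<open>All paths W m, m \<in> M, leave the common vertex a, so inclusion between them is the prefix
  order of their vertex lists read from a. This order has dimension two: comparing the lists
  lexicographically for a labelling of the vertices and for its reverse gives ranks l m and r m
  with m < m' iff l m < l m' and r m < r m'. Since M is a strong module without a common upper
  bound, nothing outside M lies above an element of M, and an element lies below M exactly when
  its path lies in the intersection C of the paths W m, which is again a path from a. Hang a new
  path of length |M| at each end of C and let the path of m run from depth l m on the first one
  through C to depth r m on the second: all relations are kept, and distinct elements of M now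
  have distinct endpoints.\<close>

section \<open>Paths and trees\<close>

lemma is_path_singleton [simp]: "is_path E [x]"
  by (simp add: is_path_def)

lemma is_path_Cons_Cons:
  "is_path E (x # y # xs) \<longleftrightarrow> E x y \<and> x \<notin> set (y # xs) \<and> is_path E (y # xs)"
  unfolding is_path_def by (auto simp: nth_Cons split: nat.splits)

lemma is_path_nonempty: "is_path E xs \<Longrightarrow> xs \<noteq> []"
  by (simp add: is_path_def)

lemma is_path_take: "is_path E xs \<Longrightarrow> 0 < k \<Longrightarrow> is_path E (take k xs)"
  unfolding is_path_def by auto

lemma is_path_mono: "is_path E xs \<Longrightarrow> (\<And>x y. E x y \<Longrightarrow> E' x y) \<Longrightarrow> is_path E' xs"
  unfolding is_path_def by auto

lemma is_path_rev:
  assumes sym: "\<forall>u v. E u v \<longrightarrow> E v u" and p: "is_path E xs"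
  shows "is_path E (rev xs)"
  unfolding is_path_def
proof (intro conjI allI impI)
  show "rev xs \<noteq> []" "distinct (rev xs)" using p by (auto simp: is_path_def)
  fix i assume i: "Suc i < length (rev xs)"
  have "E (xs ! (length xs - Suc (Suc i))) (xs ! Suc (length xs - Suc (Suc i)))"
    using p i by (auto simp: is_path_def)
  moreover have "Suc (length xs - Suc (Suc i)) = length xs - Suc i" using i by auto
  ultimately show "E (rev xs ! i) (rev xs ! Suc i)" using sym i by (auto simp: rev_nth)
qed

lemma is_path_append:
  assumes "is_path E xs" "is_path E ys" "set xs \<inter> set ys = {}" "E (last xs) (hd ys)"
  shows "is_path E (xs @ ys)"
  unfolding is_path_def
proof (intro conjI allI impI)
  show "xs @ ys \<noteq> []" "distinct (xs @ ys)" using assms by (auto simp: is_path_def)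
  fix i assume i: "Suc i < length (xs @ ys)"
  consider "Suc i < length xs" | "Suc i = length xs" | "length xs \<le> i" by linarith
  then show "E ((xs @ ys) ! i) ((xs @ ys) ! Suc i)"
  proof cases
    case 1
    then show ?thesis using assms(1) by (auto simp: is_path_def nth_append)
  next
    case 2
    then have "xs ! i = last xs" using assms(1) by (simp add: is_path_def last_conv_nth flip: 2)
    moreover have "ys ! 0 = hd ys" using assms(2) by (simp add: is_path_def hd_conv_nth)
    ultimately show ?thesis using 2 assms(4) by (auto simp: nth_append)
  next
    case 3
    then have "Suc (i - length xs) < length ys" using i by auto
    then have "E (ys ! (i - length xs)) (ys ! Suc (i - length xs))"
      using assms(2) by (auto simp: is_path_def)
    moreover have "Suc i - length xs = Suc (i - length xs)" using 3 by auto
    ultimately show ?thesis using 3 by (auto simp: nth_append)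
  qed
qed

lemma is_path_map_upt:
  assumes "i < j" "inj_on g {i..<j}" "\<And>k. i \<le> k \<Longrightarrow> Suc k < j \<Longrightarrow> E (g k) (g (Suc k))"
  shows "is_path E (map g [i..<j])"
  unfolding is_path_def using assms by (auto simp: distinct_map)

lemma is_path_hd_eq_last: "is_path E xs \<Longrightarrow> hd xs = last xs \<Longrightarrow> xs = [hd xs]"
  by (cases xs) (auto simp: is_path_def split: if_splits)

lemma is_path_subset_vertices:
  assumes p: "is_path E xs" and edges: "\<forall>u v. E u v \<longrightarrow> u \<in> V \<and> v \<in> V" and hd: "hd xs \<in> V"
  shows "set xs \<subseteq> V"
proof
  fix x assume "x \<in> set xs"
  then obtain i where i: "i < length xs" "xs ! i = x" by (auto simp: in_set_conv_nth)
  show "x \<in> V"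
  proof (cases i)
    case 0
    then show ?thesis using i hd p by (auto simp: is_path_def hd_conv_nth)
  next
    case (Suc k)
    then show ?thesis using p edges i by (auto simp: is_path_def)
  qed
qed

lemma is_path_interior_neighbours:
  assumes p: "is_path E ys" and sym: "\<forall>u w. E u w \<longrightarrow> E w u"
    and v: "v \<in> set ys" "v \<noteq> hd ys" "v \<noteq> last ys"
  obtains y1 y2 where "y1 \<in> set ys" "y2 \<in> set ys" "y1 \<noteq> y2" "E v y1" "E v y2"
proof -
  obtain i where i: "i < length ys" "ys ! i = v" using v by (auto simp: in_set_conv_nth)
  have ne: "ys \<noteq> []" using p by (simp add: is_path_def)
  have "i \<noteq> 0" using i v ne by (metis hd_conv_nth)
  moreover have "Suc i \<noteq> length ys" using i v ne by (metis diff_Suc_1 last_conv_nth)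
  ultimately obtain k where k: "i = Suc k" "Suc i < length ys" using i by (cases i) auto
  have "E (ys ! i) (ys ! k)" "E (ys ! i) (ys ! Suc i)" using p k sym by (auto simp: is_path_def)
  moreover have "ys ! k \<noteq> ys ! Suc i" using p k by (auto simp: is_path_def nth_eq_iff_index_eq)
  ultimately show ?thesis using that i k by (metis Suc_lessD nth_mem)
qed

lemma tree_edge_vertices: "tree V E \<Longrightarrow> E u v \<Longrightarrow> u \<in> V \<and> v \<in> V"
  by (simp add: tree_def)

lemma tree_sym: "tree V E \<Longrightarrow> \<forall>u v. E u v \<longrightarrow> E v u"
  by (simp add: tree_def)

lemma tree_irrefl: "tree V E \<Longrightarrow> \<not> E u u"
  by (simp add: tree_def)

lemma tree_path_unique:
  assumes "tree V E" "is_path E p" "is_path E q" "hd p = hd q" "last p = last q" "hd p \<in> V" "last p \<in> V"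
  shows "p = q"
  using assms unfolding tree_def by metis

lemma tree_obtain_path:
  assumes "tree V E" "x \<in> V" "y \<in> V"
  obtains p where "is_path E p" "hd p = x" "last p = y"
  using assms unfolding tree_def by metis

lemma tree_path_vertices: "tree V E \<Longrightarrow> is_path E xs \<Longrightarrow> hd xs \<in> V \<Longrightarrow> set xs \<subseteq> V"
  using is_path_subset_vertices tree_edge_vertices by metis

lemma tree_neighbour_of_hd_on_path:
  assumes t: "tree V E" and p: "is_path E xs" and xs: "set xs \<subseteq> V"
    and y: "y \<in> set xs" "E (hd xs) y"
  shows "y = xs ! 1"
proof -
  obtain j where j: "j < length xs" "xs ! j = y" using y by (auto simp: in_set_conv_nth)
  have ne: "xs \<noteq> []" using p by (simp add: is_path_def)
  have "hd xs \<noteq> y" using tree_irrefl[OF t] y by metis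
  then have "j \<noteq> 0" using j ne by (metis hd_conv_nth)
  moreover have "\<not> j \<ge> 2"
  proof
    assume j2: "j \<ge> 2"
    have "is_path E [hd xs, y]" using \<open>hd xs \<noteq> y\<close> y by (simp add: is_path_Cons_Cons)
    moreover have "is_path E (take (Suc j) xs)" using is_path_take[OF p] by simp
    moreover have "hd (take (Suc j) xs) = hd xs" using ne by simp
    moreover have "last (take (Suc j) xs) = y" using j by (simp add: take_Suc_conv_app_nth)
    moreover have "hd xs \<in> V" "y \<in> V" using xs y ne by auto
    ultimately have "[hd xs, y] = take (Suc j) xs" using tree_path_unique[OF t] by simp
    then have "length [hd xs, y] = length (take (Suc j) xs)" by simp
    then show False using j j2 by simp
  qed
  ultimately have "j = 1" by simp
  then show ?thesis using j by simp
qed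

lemma endpoint_path_from:
  assumes t: "tree V E" and ep: "endpoint E v W"
  obtains xs where "is_path E xs" "set xs = W" "hd xs = v"
proof -
  obtain xs where xs: "is_path E xs" "set xs = W" "v = hd xs \<or> v = last xs"
    using ep unfolding endpoint_def by blast
  show ?thesis
  proof (cases "v = hd xs")
    case True
    then show ?thesis using that xs by blast
  next
    case False
    then have "hd (rev xs) = v" using xs by (simp add: is_path_def hd_rev)
    then show ?thesis using that is_path_rev[OF tree_sym[OF t] xs(1)] xs(2) by simp
  qed
qed

text \<open>In a tree a vertex set spans at most one path up to reversal, so its endpoints are
  exactly the two ends of any path listing it.\<close>

lemma endpoint_hd_or_last:
  assumes t: "tree V E" and p: "is_path E ys" and ys: "set ys \<subseteq> V" and ep: "endpoint E v (set ys)"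
  shows "v = hd ys \<or> v = last ys"
proof (rule ccontr)
  assume interior: "\<not> (v = hd ys \<or> v = last ys)"
  obtain zs where zs: "is_path E zs" "set zs = set ys" "hd zs = v"
    using endpoint_path_from[OF t ep] .
  have "v \<in> set ys" using zs is_path_nonempty[OF zs(1)] by (metis hd_in_set)
  then obtain y1 y2 where y: "y1 \<in> set ys" "y2 \<in> set ys" "y1 \<noteq> y2" "E v y1" "E v y2"
    using is_path_interior_neighbours[OF p tree_sym[OF t]] interior by metis
  have "y1 = zs ! 1" "y2 = zs ! 1"
    using tree_neighbour_of_hd_on_path[OF t zs(1)] zs ys y by auto
  then show False using y by simp
qed

lemma tree_paths_common_prefix:
  assumes t: "tree V E" and p: "is_path E p" and q: "is_path E q" and pV: "set p \<subseteq> V"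
    and hd: "hd p = hd q" and i: "i < length p" and j: "j < length q" and u: "p ! i = q ! j"
  shows "take (Suc i) p = take (Suc j) q"
proof (rule tree_path_unique[OF t is_path_take[OF p] is_path_take[OF q]])
  have ne: "p \<noteq> []" "q \<noteq> []" using p q by (auto simp: is_path_def)
  then show "hd (take (Suc i) p) = hd (take (Suc j) q)" using hd by simp
  show "hd (take (Suc i) p) \<in> V" using ne pV by (simp add: subsetD)
  show "last (take (Suc i) p) = last (take (Suc j) q)" "last (take (Suc i) p) \<in> V"
    using i j u pV by (auto simp: take_Suc_conv_app_nth simp flip: u)
qed simp_all

lemma tree_prefix_of_subset:
  assumes t: "tree V E" and p: "is_path E p" and q: "is_path E q" and pV: "set p \<subseteq> V"
    and hd: "hd p = hd q" and sub: "set p \<subseteq> set q"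
  shows "prefix p q"
proof -
  have ne: "p \<noteq> []" using p by (auto simp: is_path_def)
  then have "last p \<in> set q" using sub by auto
  then obtain j where j: "j < length q" "q ! j = last p" by (auto simp: in_set_conv_nth)
  have "take (Suc (length p - 1)) p = take (Suc j) q"
    by (rule tree_paths_common_prefix[OF t p q pV hd _ j(1)]) (use ne j(2) in \<open>auto simp: last_conv_nth\<close>)
  then have "p = take (Suc j) q" using ne by simp
  then show ?thesis by (metis take_is_prefix)
qed

lemma tree_strict_prefix_iff_psubset:
  assumes t: "tree V E" and p: "is_path E p" and q: "is_path E q"
    and pV: "set p \<subseteq> V" and qV: "set q \<subseteq> V" and hd: "hd p = hd q"
  shows "strict_prefix p q \<longleftrightarrow> set p \<subset> set q"
proof
  assume pq: "strict_prefix p q"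
  then have "set p \<subseteq> set q" by (metis prefix_order.less_imp_le set_mono_prefix)
  moreover have "\<not> prefix q p" using pq by (simp add: prefix_order.leD)
  then have "\<not> set q \<subseteq> set p" using tree_prefix_of_subset[OF t q p qV] hd by metis
  ultimately show "set p \<subset> set q" by blast
next
  assume "set p \<subset> set q"
  then show "strict_prefix p q"
    using tree_prefix_of_subset[OF t p q pV hd] by (auto simp: strict_prefix_def)
qed

text \<open>Paths leaving a common vertex share an initial segment and then separate for good;
  hence their intersection is again a path from that vertex.\<close>

lemma tree_Inter_paths_from:
  assumes t: "tree V E" and m0: "m0 \<in> M"
    and L: "\<And>m. m \<in> M \<Longrightarrow> is_path E (L m) \<and> set (L m) \<subseteq> V \<and> hd (L m) = a"
  obtains C where "is_path E C" "hd C = a" "set C = (\<Inter>m\<in>M. set (L m))"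
proof
  define P where "P = (\<lambda>u. \<forall>m\<in>M. u \<in> set (L m))"
  define C where "C = takeWhile P (L m0)"
  have ne: "L m0 \<noteq> []" using L[OF m0] is_path_nonempty by blast
  have "P a" unfolding P_def using L is_path_nonempty by (metis hd_in_set)
  then have C: "C = a # takeWhile P (tl (L m0))"
    unfolding C_def using L[OF m0] ne by (cases "L m0") auto
  then show "hd C = a" by simp
  have "C = take (length C) (L m0)" unfolding C_def by (rule takeWhile_eq_take)
  moreover have "is_path E (take (length C) (L m0))"
    using is_path_take L[OF m0] C by (metis length_greater_0_conv list.discI)
  ultimately show "is_path E C" by simp
  show "set C = (\<Inter>m\<in>M. set (L m))"
  proof
    show "set C \<subseteq> (\<Inter>m\<in>M. set (L m))" unfolding C_def P_def by (auto dest: set_takeWhileD)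
  next
    show "(\<Inter>m\<in>M. set (L m)) \<subseteq> set C"
    proof
      fix u assume u: "u \<in> (\<Inter>m\<in>M. set (L m))"
      then obtain j where j: "j < length (L m0)" "L m0 ! j = u"
        using m0 by (auto simp: in_set_conv_nth)
      have "set (take (Suc j) (L m0)) \<subseteq> set (L m)" if m: "m \<in> M" for m
      proof -
        obtain i where i: "i < length (L m)" "L m ! i = u" using u m by (auto simp: in_set_conv_nth)
        have "take (Suc j) (L m0) = take (Suc i) (L m)"
          using tree_paths_common_prefix[OF t _ _ _ _ j(1) i(1)] L[OF m0] L[OF m] i j by simp
        then show ?thesis by (metis set_take_subset)
      qed
      then have "\<forall>x\<in>set (take (Suc j) (L m0)). P x" unfolding P_def by blast
      then have "C = take (Suc j) (L m0) @ takeWhile P (drop (Suc j) (L m0))"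
        unfolding C_def by (metis append_take_drop_id takeWhile_append2)
      moreover have "u \<in> set (take (Suc j) (L m0))" using j by (simp add: take_Suc_conv_app_nth)
      ultimately show "u \<in> set C" by simp
    qed
  qed
qed

section \<open>Relabelling the vertices of a tree\<close>

definition relabel_edges :: "('v \<Rightarrow> 'w) \<Rightarrow> 'v set \<Rightarrow> ('v \<Rightarrow> 'v \<Rightarrow> bool) \<Rightarrow> 'w \<Rightarrow> 'w \<Rightarrow> bool" where
  "relabel_edges h V E x y \<longleftrightarrow> (\<exists>u\<in>V. \<exists>v\<in>V. x = h u \<and> y = h v \<and> E u v)"

lemma inj_on_image_psubset_iff:
  "inj_on h V \<Longrightarrow> A \<subseteq> V \<Longrightarrow> B \<subseteq> V \<Longrightarrow> h ` A \<subset> h ` B \<longleftrightarrow> A \<subset> B"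
  unfolding inj_on_def by blast

lemma is_path_relabel:
  assumes inj: "inj_on h V" and p: "is_path E xs" and xs: "set xs \<subseteq> V"
  shows "is_path (relabel_edges h V E) (map h xs)"
  unfolding is_path_def
proof (intro conjI allI impI)
  show "map h xs \<noteq> []" using p by (simp add: is_path_def)
  show "distinct (map h xs)" using p xs inj by (simp add: is_path_def distinct_map inj_on_subset)
  fix i assume i: "Suc i < length (map h xs)"
  then have "E (xs ! i) (xs ! Suc i)" "xs ! i \<in> V" "xs ! Suc i \<in> V"
    using p xs by (auto simp: is_path_def)
  then show "relabel_edges h V E (map h xs ! i) (map h xs ! Suc i)"
    using i unfolding relabel_edges_def by auto
qed

lemma is_path_unrelabel:
  assumes inj: "inj_on h V" and p: "is_path (relabel_edges h V E) zs" and hd: "hd zs \<in> h ` V"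
  obtains xs where "zs = map h xs" "set xs \<subseteq> V" "is_path E xs"
proof
  let ?g = "inv_into V h"
  have zs: "set zs \<subseteq> h ` V"
    using is_path_subset_vertices[OF p _ hd] unfolding relabel_edges_def by blast
  then show "zs = map h (map ?g zs)" by (simp add: map_idI f_inv_into_f subsetD)
  show "set (map ?g zs) \<subseteq> V" using zs by (auto simp: inv_into_into)
  show "is_path E (map ?g zs)"
    unfolding is_path_def
  proof (intro conjI allI impI)
    show "map ?g zs \<noteq> []" using p by (simp add: is_path_def)
    have "inj_on ?g (h ` V)" by (rule inj_on_inv_into) simp
    then show "distinct (map ?g zs)" using p zs by (simp add: is_path_def distinct_map inj_on_subset)
    fix i assume i: "Suc i < length (map ?g zs)"
    then have "relabel_edges h V E (zs ! i) (zs ! Suc i)" using p by (simp add: is_path_def)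
    then obtain u v where "u \<in> V" "v \<in> V" "zs ! i = h u" "zs ! Suc i = h v" "E u v"
      unfolding relabel_edges_def by blast
    then show "E (map ?g zs ! i) (map ?g zs ! Suc i)" using i inj by (simp add: inv_into_f_f)
  qed
qed

lemma tree_relabel:
  assumes t: "tree V E" and inj: "inj_on h V"
  shows "tree (h ` V) (relabel_edges h V E)"
  unfolding tree_def
proof (intro conjI ballI allI impI)
  show "finite (h ` V)" "h ` V \<noteq> {}" using t by (auto simp: tree_def)
next
  fix x y assume "relabel_edges h V E x y"
  then show "x \<in> h ` V" "y \<in> h ` V" "relabel_edges h V E y x"
    using tree_sym[OF t] unfolding relabel_edges_def by auto
next
  fix x show "\<not> relabel_edges h V E x x"
    using tree_irrefl[OF t] inj unfolding relabel_edges_def by (metis inj_on_def)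
next
  fix x y assume "x \<in> h ` V" "y \<in> h ` V"
  then obtain x0 y0 where xy: "x0 \<in> V" "y0 \<in> V" "x = h x0" "y = h y0" by blast
  obtain p where p: "is_path E p" "hd p = x0" "last p = y0" using tree_obtain_path[OF t xy(1,2)] .
  have pV: "set p \<subseteq> V" using tree_path_vertices[OF t p(1)] p xy by blast
  have ne: "p \<noteq> []" using p by (simp add: is_path_def)
  show "\<exists>!zs. is_path (relabel_edges h V E) zs \<and> hd zs = x \<and> last zs = y"
  proof (rule ex1I[of _ "map h p"])
    show "is_path (relabel_edges h V E) (map h p) \<and> hd (map h p) = x \<and> last (map h p) = y"
      using is_path_relabel[OF inj p(1) pV] p xy ne by (simp add: hd_map last_map)
  next
    fix zs assume zs: "is_path (relabel_edges h V E) zs \<and> hd zs = x \<and> last zs = y"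
    then obtain q where q: "zs = map h q" "set q \<subseteq> V" "is_path E q"
      using is_path_unrelabel[OF inj] xy by blast
    have "q \<noteq> []" using q(3) by (simp add: is_path_def)
    then have "hd q = x0" "last q = y0"
      using zs q xy inj by (auto simp: hd_map last_map inj_on_def subsetD)
    then have "q = p" using tree_path_unique[OF t q(3) p(1)] p xy by simp
    then show "zs = map h p" using q(1) by simp
  qed
qed

lemma endpoint_relabel:
  assumes inj: "inj_on h V" and WV: "W \<subseteq> V" and ep: "endpoint (relabel_edges h V E) v (h ` W)"
  obtains u where "u \<in> W" "v = h u" "endpoint E u W"
proof -
  obtain zs where zs: "is_path (relabel_edges h V E) zs" "set zs = h ` W" "v = hd zs \<or> v = last zs"
    using ep unfolding endpoint_def by blast
  have "hd zs \<in> h ` V" using zs WV is_path_nonempty[OF zs(1)] by (metis hd_in_set image_mono subsetD)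
  then obtain xs where xs: "zs = map h xs" "set xs \<subseteq> V" "is_path E xs"
    using is_path_unrelabel[OF inj zs(1)] by blast
  have ne: "xs \<noteq> []" using xs(3) by (simp add: is_path_def)
  have W: "set xs = W" using zs(2) xs inj_on_image_eq_iff[OF inj xs(2) WV] by simp
  have "endpoint E (hd xs) W" "endpoint E (last xs) W"
    using xs(3) W unfolding endpoint_def by blast+
  moreover have "hd xs \<in> W" "last xs \<in> W" using W ne by auto
  moreover have "v = h (hd xs) \<or> v = h (last xs)" using zs(3) xs(1) ne by (simp add: hd_map last_map)
  ultimately show ?thesis using that by blast
qed

lemma cpt_rep_relabel_nat:
  assumes cr: "cpt_rep X lt V E W"
  obtains V' :: "nat set" and E' W' where "cpt_rep X lt V' E' W'"
    "\<And>x y v. x \<in> X \<Longrightarrow> y \<in> X \<Longrightarrow> endpoint E' v (W' x) \<Longrightarrow> endpoint E' v (W' y) \<Longrightarrow>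
       \<exists>u. endpoint E u (W x) \<and> endpoint E u (W y)"
proof -
  have t: "tree V E" using cr by (simp add: cpt_rep_def)
  obtain h :: "'b \<Rightarrow> nat" where inj: "inj_on h V"
    using finite_imp_inj_to_nat_seg t unfolding tree_def by metis
  have WV: "W x \<subseteq> V" if "x \<in> X" for x
    using cr that unfolding cpt_rep_def tree_path_def by blast
  show ?thesis
  proof (rule that)
    show "cpt_rep X lt (h ` V) (relabel_edges h V E) (\<lambda>x. h ` W x)"
      unfolding cpt_rep_def
    proof (intro conjI ballI)
      show "tree (h ` V) (relabel_edges h V E)" using tree_relabel[OF t inj] .
    next
      fix x assume x: "x \<in> X"
      then obtain xs where xs: "is_path E xs" "set xs \<subseteq> V" "set xs = W x"
        using cr unfolding cpt_rep_def tree_path_def by blast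
      have "is_path (relabel_edges h V E) (map h xs)" using is_path_relabel[OF inj xs(1,2)] .
      moreover have "set (map h xs) \<subseteq> h ` V" "set (map h xs) = h ` W x" using xs by auto
      ultimately show "tree_path (h ` V) (relabel_edges h V E) (h ` W x)"
        unfolding tree_path_def by blast
    next
      fix x y assume "x \<in> X" "y \<in> X"
      then have "lt x y \<longleftrightarrow> W x \<subset> W y" using cr unfolding cpt_rep_def by blast
      then show "lt x y \<longleftrightarrow> h ` W x \<subset> h ` W y"
        using inj_on_image_psubset_iff[OF inj WV WV] \<open>x \<in> X\<close> \<open>y \<in> X\<close> by simp
    qed
  next
    fix x y v assume x: "x \<in> X" and y: "y \<in> X"
      and "endpoint (relabel_edges h V E) v (h ` W x)" "endpoint (relabel_edges h V E) v (h ` W y)"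
    obtain u where u: "u \<in> W x" "v = h u" "endpoint E u (W x)"
      using endpoint_relabel[OF inj WV[OF x]] \<open>endpoint _ v (h ` W x)\<close> by blast
    obtain u' where u': "u' \<in> W y" "v = h u'" "endpoint E u' (W y)"
      using endpoint_relabel[OF inj WV[OF y]] \<open>endpoint _ v (h ` W y)\<close> by blast
    have "u = u'" using inj_onD[OF inj] u u' WV[OF x] WV[OF y] by auto
    then show "\<exists>u. endpoint E u (W x) \<and> endpoint E u (W y)" using u u' by blast
  qed
qed

section \<open>Hanging two paths onto a tree\<close>

lemma ex1_path_rev:
  assumes sym: "\<forall>u v. E u v \<longrightarrow> E v u" and ex1: "\<exists>!xs. is_path E xs \<and> hd xs = x \<and> last xs = y"
  shows "\<exists>!xs. is_path E xs \<and> hd xs = y \<and> last xs = x"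
proof -
  obtain p where p: "is_path E p" "hd p = x" "last p = y"
    and uniq: "\<And>q. is_path E q \<and> hd q = x \<and> last q = y \<Longrightarrow> q = p"
    using ex1 by blast
  show ?thesis
  proof (rule ex1I[of _ "rev p"])
    show "is_path E (rev p) \<and> hd (rev p) = y \<and> last (rev p) = x"
      using p is_path_rev[OF sym] is_path_nonempty by (simp add: hd_rev last_rev)
  next
    fix q assume q: "is_path E q \<and> hd q = y \<and> last q = x"
    then have "rev q = p"
      using uniq is_path_rev[OF sym] is_path_nonempty by (simp add: hd_rev last_rev)
    then show "q = rev p" by auto
  qed
qed

definition add_leaf :: "('v \<Rightarrow> 'v \<Rightarrow> bool) \<Rightarrow> 'v \<Rightarrow> 'v \<Rightarrow> 'v \<Rightarrow> 'v \<Rightarrow> bool" where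
  "add_leaf E u w = (\<lambda>x y. E x y \<or> (x = u \<and> y = w) \<or> (x = w \<and> y = u))"

lemma is_path_add_leaf: "is_path E xs \<Longrightarrow> is_path (add_leaf E u w) xs"
  by (erule is_path_mono) (simp add: add_leaf_def)

lemma is_path_add_leaf_avoiding:
  assumes p: "is_path (add_leaf E u w) xs" and w: "w \<notin> set xs"
  shows "is_path E xs"
  unfolding is_path_def
proof (intro conjI allI impI)
  show "xs \<noteq> []" "distinct xs" using p by (auto simp: is_path_def)
  fix i assume i: "Suc i < length xs"
  then have "xs ! i \<noteq> w" "xs ! Suc i \<noteq> w" using w by (metis Suc_lessD nth_mem)+
  then show "E (xs ! i) (xs ! Suc i)" using p i unfolding is_path_def add_leaf_def by blast
qed

lemma add_leaf_sym: "tree V E \<Longrightarrow> \<forall>x y. add_leaf E u w x y \<longrightarrow> add_leaf E u w y x"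
  using tree_sym[of V E] by (auto simp: add_leaf_def)

lemma add_leaf_neighbour_of_leaf: "tree V E \<Longrightarrow> w \<notin> V \<Longrightarrow> add_leaf E u w w y \<Longrightarrow> y = u"
  using tree_edge_vertices[of V E] by (auto simp: add_leaf_def)

lemma add_leaf_leaf_at_end:
  assumes t: "tree V E" and w: "w \<notin> V" and p: "is_path (add_leaf E u w) xs" and "w \<in> set xs"
  shows "w = hd xs \<or> w = last xs"
proof (rule ccontr)
  assume "\<not> (w = hd xs \<or> w = last xs)"
  then obtain y1 y2 where "y1 \<noteq> y2" "add_leaf E u w w y1" "add_leaf E u w w y2"
    using is_path_interior_neighbours[OF p add_leaf_sym[OF t] \<open>w \<in> set xs\<close>] by metis
  then show False using add_leaf_neighbour_of_leaf[OF t w] by blast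
qed

lemma add_leaf_unique_path:
  assumes t: "tree V E" and w: "w \<notin> V" and xy: "x \<in> V" "y \<in> V"
  shows "\<exists>!xs. is_path (add_leaf E u w) xs \<and> hd xs = x \<and> last xs = y"
proof -
  obtain p where p: "is_path E p" "hd p = x" "last p = y" using tree_obtain_path[OF t xy] .
  show ?thesis
  proof (rule ex1I[of _ p])
    show "is_path (add_leaf E u w) p \<and> hd p = x \<and> last p = y" using is_path_add_leaf[OF p(1)] p by simp
  next
    fix q assume q: "is_path (add_leaf E u w) q \<and> hd q = x \<and> last q = y"
    then have "w \<noteq> hd q" "w \<noteq> last q" using xy w by auto
    then have "w \<notin> set q" using add_leaf_leaf_at_end[OF t w] q by blast
    then have "is_path E q" using is_path_add_leaf_avoiding[of E u w q] q by blast
    then show "q = p" by (intro tree_path_unique[OF t _ p(1)]) (use p q xy in auto)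
  qed
qed

lemma add_leaf_unique_path_from_leaf:
  assumes t: "tree V E" and u: "u \<in> V" and w: "w \<notin> V" and y: "y \<in> V"
  shows "\<exists>!xs. is_path (add_leaf E u w) xs \<and> hd xs = w \<and> last xs = y"
proof -
  let ?F = "add_leaf E u w"
  obtain p where p: "is_path E p" "hd p = u" "last p = y" using tree_obtain_path[OF t u y] .
  obtain z zs where pz: "p = z # zs" using is_path_nonempty[OF p(1)] by (cases p) auto
  have "set p \<subseteq> V" using tree_path_vertices[OF t p(1)] p u by simp
  then have "w \<notin> set p" using w by blast
  moreover have "?F w z" using pz p(2) by (simp add: add_leaf_def)
  ultimately have wp: "is_path ?F (w # p)"
    using is_path_add_leaf[OF p(1)] pz by (simp add: is_path_Cons_Cons)
  show ?thesis
  proof (rule ex1I[of _ "w # p"])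
    show "is_path ?F (w # p) \<and> hd (w # p) = w \<and> last (w # p) = y"
      using wp p pz by simp
  next
    fix xs assume xs: "is_path ?F xs \<and> hd xs = w \<and> last xs = y"
    obtain xs' where xs': "xs = w # xs'" using xs is_path_nonempty by (cases xs) auto
    have "xs' \<noteq> []" using xs xs' y w by auto
    then obtain z zs where xs_eq: "xs = w # z # zs" using xs' by (cases xs') auto
    then have "?F w z" "w \<notin> set (z # zs)" "is_path ?F (z # zs)"
      using xs by (auto simp: is_path_Cons_Cons)
    then have "z = u" "is_path E (z # zs)"
      using add_leaf_neighbour_of_leaf[OF t w] is_path_add_leaf_avoiding[of E u w] by auto
    then have "z # zs = p" by (intro tree_path_unique[OF t _ p(1)]) (use p xs xs_eq u y in auto)
    then show "xs = w # p" using xs_eq by simp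
  qed
qed

lemma tree_add_leaf:
  assumes t: "tree V E" and u: "u \<in> V" and w: "w \<notin> V"
  shows "tree (insert w V) (add_leaf E u w)"
  unfolding tree_def
proof (intro conjI ballI allI impI)
  show "finite (insert w V)" "insert w V \<noteq> {}" using t by (auto simp: tree_def)
next
  fix x y assume "add_leaf E u w x y"
  then show "x \<in> insert w V" "y \<in> insert w V" "add_leaf E u w y x"
    using tree_edge_vertices[OF t] tree_sym[OF t] u by (auto simp: add_leaf_def)
next
  fix x show "\<not> add_leaf E u w x x" using tree_irrefl[OF t] u w by (auto simp: add_leaf_def)
next
  have w_w: "\<exists>!xs. is_path (add_leaf E u w) xs \<and> hd xs = w \<and> last xs = w"
  proof (rule ex1I[of _ "[w]"])
    fix xs assume "is_path (add_leaf E u w) xs \<and> hd xs = w \<and> last xs = w"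
    then show "xs = [w]" using is_path_hd_eq_last[of "add_leaf E u w" xs] by simp
  qed simp
  fix x y assume "x \<in> insert w V" "y \<in> insert w V"
  then consider "x \<in> V" "y \<in> V" | "x = w" "y \<in> V" | "x \<in> V" "y = w" | "x = w" "y = w"
    by blast
  then show "\<exists>!xs. is_path (add_leaf E u w) xs \<and> hd xs = x \<and> last xs = y"
    by cases (use add_leaf_unique_path[OF t w] add_leaf_unique_path_from_leaf[OF t u w] w_w
        ex1_path_rev[OF add_leaf_sym[OF t]] in simp_all)
qed

text \<open>The host tree V with a new path of length n hanging off the vertex a (vertices
  Inr (True, i)) and one hanging off c (vertices Inr (False, i)); index 0 of a pendant
  path is its attachment vertex.\<close>

definition pendant_vertex :: "bool \<Rightarrow> 'v \<Rightarrow> nat \<Rightarrow> 'v + bool \<times> nat" where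
  "pendant_vertex b u i = (if i = 0 then Inl u else Inr (b, i))"

definition pendant_vertices :: "'v set \<Rightarrow> nat \<Rightarrow> ('v + bool \<times> nat) set" where
  "pendant_vertices V n = Inl ` V \<union> Inr ` (UNIV \<times> {1..n})"

primrec pendant_edges ::
    "('v \<Rightarrow> 'v \<Rightarrow> bool) \<Rightarrow> 'v \<Rightarrow> 'v \<Rightarrow> nat \<Rightarrow> 'v + bool \<times> nat \<Rightarrow> 'v + bool \<times> nat \<Rightarrow> bool" where
  "pendant_edges E a c 0 = (\<lambda>x y. \<exists>u v. x = Inl u \<and> y = Inl v \<and> E u v)"
| "pendant_edges E a c (Suc n) =
     add_leaf (add_leaf (pendant_edges E a c n) (pendant_vertex True a n) (Inr (True, Suc n)))
       (pendant_vertex False c n) (Inr (False, Suc n))"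

lemma pendant_edges_Inl: "E u v \<Longrightarrow> pendant_edges E a c n (Inl u) (Inl v)"
  by (induction n) (auto simp: add_leaf_def)

lemma pendant_edges_step:
  "i < n \<Longrightarrow> pendant_edges E a c n (pendant_vertex True a i) (Inr (True, Suc i))"
  "i < n \<Longrightarrow> pendant_edges E a c n (pendant_vertex False c i) (Inr (False, Suc i))"
  by (induction n) (auto simp: add_leaf_def less_Suc_eq)

lemma pendant_vertex_in: "u \<in> V \<Longrightarrow> i \<le> n \<Longrightarrow> pendant_vertex b u i \<in> pendant_vertices V n"
  by (auto simp: pendant_vertex_def pendant_vertices_def)

lemma pendant_vertices_Suc:
  "pendant_vertices V (Suc n) =
     insert (Inr (False, Suc n)) (insert (Inr (True, Suc n)) (pendant_vertices V n))"
  by (auto simp: pendant_vertices_def)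

lemma tree_pendant:
  assumes t: "tree V E" and a: "a \<in> V" and c: "c \<in> V"
  shows "tree (pendant_vertices V n) (pendant_edges E a c n)"
proof (induction n)
  case 0
  have "pendant_vertices V 0 = Inl ` V" by (simp add: pendant_vertices_def)
  moreover have "pendant_edges E a c 0 = relabel_edges Inl V E"
    by (intro ext) (auto simp: relabel_edges_def dest: tree_edge_vertices[OF t])
  ultimately show ?case using tree_relabel[OF t, of Inl] by simp
next
  case (Suc n)
  have "tree (insert (Inr (True, Suc n)) (pendant_vertices V n))
          (add_leaf (pendant_edges E a c n) (pendant_vertex True a n) (Inr (True, Suc n)))"
    by (rule tree_add_leaf[OF Suc.IH pendant_vertex_in[OF a]]) (auto simp: pendant_vertices_def)
  then have "tree (pendant_vertices V (Suc n)) (pendant_edges E a c (Suc n))"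
    unfolding pendant_vertices_Suc pendant_edges.simps
    by (rule tree_add_leaf) (auto simp: pendant_vertices_def pendant_vertex_def c)
  then show ?case .
qed

definition extend_path :: "nat \<Rightarrow> 'v list \<Rightarrow> nat \<Rightarrow> ('v + bool \<times> nat) list" where
  "extend_path l C r = map (\<lambda>i. Inr (True, i)) (rev [1..<Suc l]) @ map Inl C
     @ map (\<lambda>i. Inr (False, i)) [1..<Suc r]"

lemma set_extend_path:
  "set (extend_path l C r) =
     (\<lambda>i. Inr (True, i)) ` {1..l} \<union> Inl ` set C \<union> (\<lambda>i. Inr (False, i)) ` {1..r}"
  unfolding extend_path_def by auto

lemma is_path_extend_path:
  assumes t: "tree V E" and C: "is_path E C" "set C \<subseteq> V" "hd C = a" "last C = c"
    and l: "l \<in> {1..n}" and r: "r \<in> {1..n}"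
  shows "is_path (pendant_edges E a c n) (extend_path l C r)"
    "set (extend_path l C r) \<subseteq> pendant_vertices V n"
    "hd (extend_path l C r) = Inr (True, l)" "last (extend_path l C r) = Inr (False, r)"
proof -
  let ?F = "pendant_edges E a c n"
  have ne: "C \<noteq> []" using C(1) by (simp add: is_path_def)
  have "a \<in> V" "c \<in> V" using C ne by auto
  then have sym: "\<forall>x y. ?F x y \<longrightarrow> ?F y x" using tree_sym[OF tree_pendant[OF t]] by blast
  let ?P = "map (\<lambda>i. Inr (True, i)) [1..<Suc l] :: ('v + bool \<times> nat) list"
  let ?Q = "map (\<lambda>i. Inr (False, i)) [1..<Suc r] :: ('v + bool \<times> nat) list"
  have "?F (Inr (b, k)) (Inr (b, Suc k))" if "1 \<le> k" "k < n" for b k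
    using pendant_edges_step[of k n E a c] that by (cases b) (simp_all add: pendant_vertex_def)
  then have P: "is_path ?F ?P" and Q: "is_path ?F ?Q"
    using l r by (auto intro!: is_path_map_upt simp: inj_on_def simp del: upt_Suc)
  have L: "is_path ?F (map Inl C)"
    using C(1) pendant_edges_Inl[of E] by (auto simp: is_path_def distinct_map)
  have "?F (last (rev ?P)) (hd (map Inl C))"
    using pendant_edges_step(1)[of 0 n E a c] l sym C(3) ne
    by (simp add: last_rev hd_map pendant_vertex_def upt_rec)
  then have PL: "is_path ?F (rev ?P @ map Inl C)"
    by (intro is_path_append[OF is_path_rev[OF sym P] L]) auto
  have "?F (last (rev ?P @ map Inl C)) (hd ?Q)"
    using pendant_edges_step(2)[of 0 n E a c] r C(4) ne
    by (simp add: last_map pendant_vertex_def upt_rec)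
  then have "is_path ?F ((rev ?P @ map Inl C) @ ?Q)"
    by (intro is_path_append[OF PL Q]) auto
  then show "is_path ?F (extend_path l C r)" by (simp add: extend_path_def rev_map)
  show "set (extend_path l C r) \<subseteq> pendant_vertices V n"
    using C(2) l r unfolding set_extend_path pendant_vertices_def by auto
  show "hd (extend_path l C r) = Inr (True, l)" "last (extend_path l C r) = Inr (False, r)"
    using l r by (simp_all add: extend_path_def hd_map hd_rev last_map)
qed

lemma endpoint_extend_path:
  assumes t: "tree V E" and C: "is_path E C" "set C \<subseteq> V" "hd C = a" "last C = c"
    and l: "l \<in> {1..n}" and r: "r \<in> {1..n}"
    and ep: "endpoint (pendant_edges E a c n) v (set (extend_path l C r))"
  shows "v = Inr (True, l) \<or> v = Inr (False, r)"
proof -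
  have "a \<in> V" "c \<in> V" using C is_path_nonempty[OF C(1)] by auto
  then show ?thesis
    using endpoint_hd_or_last[OF tree_pendant[OF t] is_path_extend_path(1,2)[OF t C l r] ep]
      is_path_extend_path(3,4)[OF t C l r] by simp
qed

lemma extend_path_psubset_iff:
  assumes "1 \<le> l" "1 \<le> r" "1 \<le> l'" "1 \<le> r'"
  shows "set (extend_path l C r) \<subset> set (extend_path l' C r') \<longleftrightarrow>
    l \<le> l' \<and> r \<le> r' \<and> (l \<noteq> l' \<or> r \<noteq> r')"
proof -
  have sub: "set (extend_path l C r) \<subseteq> set (extend_path l' C r') \<longleftrightarrow> l \<le> l' \<and> r \<le> r'"
    if "1 \<le> l" "1 \<le> r" for l r l' r'
  proof
    assume "set (extend_path l C r) \<subseteq> set (extend_path l' C r')"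
    moreover have "Inr (True, l) \<in> set (extend_path l C r)" "Inr (False, r) \<in> set (extend_path l C r)"
      using that unfolding set_extend_path by auto
    ultimately show "l \<le> l' \<and> r \<le> r'" unfolding set_extend_path by auto
  qed (auto simp: set_extend_path)
  show ?thesis using assms sub[of l r l' r'] sub[of l' r' l r] by (auto simp: psubset_eq)
qed

lemma extend_path_no_common_endpoint:
  assumes t: "tree V E" and C: "is_path E C" "set C \<subseteq> V" "hd C = a" "last C = c"
    and lr: "l \<in> {1..n}" "r \<in> {1..n}" "l' \<in> {1..n}" "r' \<in> {1..n}" and ne: "l \<noteq> l'" "r \<noteq> r'"
  shows "\<not> (endpoint (pendant_edges E a c n) u (set (extend_path l C r)) \<and>
    endpoint (pendant_edges E a c n) u (set (extend_path l' C r')))"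
  using endpoint_extend_path[OF t C lr(1,2)] endpoint_extend_path[OF t C lr(3,4)] ne by auto

definition reroute ::
    "'a set \<Rightarrow> ('a \<Rightarrow> nat) \<Rightarrow> 'v list \<Rightarrow> ('a \<Rightarrow> nat) \<Rightarrow> ('a \<Rightarrow> 'v set) \<Rightarrow> 'a \<Rightarrow> ('v + bool \<times> nat) set"
  where "reroute M l C r W x = (if x \<in> M then set (extend_path (l x) C (r x)) else Inl ` W x)"

lemma tree_path_reroute:
  assumes cr: "cpt_rep X lt V E W" and x: "x \<in> X"
    and C: "is_path E C" "set C \<subseteq> V" "hd C = a" "last C = c"
    and lr: "\<And>m. m \<in> M \<Longrightarrow> l m \<in> {1..n} \<and> r m \<in> {1..n}"
  shows "tree_path (pendant_vertices V n) (pendant_edges E a c n) (reroute M l C r W x)"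
proof (cases "x \<in> M")
  case True
  have t: "tree V E" using cr by (simp add: cpt_rep_def)
  then show ?thesis
    using is_path_extend_path(1,2)[OF t C, of "l x" n "r x"] lr True
    unfolding tree_path_def reroute_def by auto
next
  case False
  obtain xs where xs: "is_path E xs" "set xs \<subseteq> V" "set xs = W x"
    using cr x unfolding cpt_rep_def tree_path_def by blast
  have "is_path (pendant_edges E a c n) (map Inl xs)"
    using xs(1) pendant_edges_Inl[of E] by (auto simp: is_path_def distinct_map)
  then show ?thesis
    using xs False unfolding tree_path_def pendant_vertices_def reroute_def
    by (intro exI[of _ "map Inl xs"]) auto
qed

lemma reroute_psubset_iff:
  fixes l r :: "'a \<Rightarrow> nat"
  assumes cr: "cpt_rep X lt V E W" and x: "x \<in> X" and y: "y \<in> X"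
    and lr: "\<And>m. m \<in> M \<Longrightarrow> l m \<in> {1..n} \<and> r m \<in> {1..n}" "inj_on l M" "inj_on r M"
    and order_M: "\<And>m m'. m \<in> M \<Longrightarrow> m' \<in> M \<Longrightarrow> m \<noteq> m' \<Longrightarrow> lt m m' \<longleftrightarrow> l m < l m' \<and> r m < r m'"
    and not_above: "\<And>z m. z \<in> X - M \<Longrightarrow> m \<in> M \<Longrightarrow> \<not> lt m z"
    and below: "\<And>z m. z \<in> X - M \<Longrightarrow> m \<in> M \<Longrightarrow> lt z m \<longleftrightarrow> W z \<subseteq> set C"
  shows "lt x y \<longleftrightarrow> reroute M l C r W x \<subset> reroute M l C r W y"
proof -
  have rel: "lt x' y' \<longleftrightarrow> W x' \<subset> W y'" if "x' \<in> X" "y' \<in> X" for x' y'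
    using cr that by (auto simp: cpt_rep_def)
  have tip: "Inr (True, l m) \<in> reroute M l C r W m" if "m \<in> M" for m
    using lr(1)[OF that] that by (auto simp: set_extend_path reroute_def)
  consider "x \<in> M" "y \<in> M" | "x \<in> M" "y \<notin> M" | "x \<notin> M" "y \<in> M" | "x \<notin> M" "y \<notin> M"
    by blast
  then show ?thesis
  proof cases
    case 1
    show ?thesis
    proof (cases "x = y")
      case True
      then show ?thesis using rel[OF x x] by simp
    next
      case False
      then have "l x \<noteq> l y" "r x \<noteq> r y" using lr(2,3) 1 by (auto simp: inj_on_def)
      moreover have "reroute M l C r W x \<subset> reroute M l C r W y \<longleftrightarrow>
          l x \<le> l y \<and> r x \<le> r y \<and> (l x \<noteq> l y \<or> r x \<noteq> r y)"
        using extend_path_psubset_iff[of "l x" "r x" "l y" "r y" C] lr(1)[OF 1(1)] lr(1)[OF 1(2)] 1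
        by (simp add: reroute_def)
      ultimately show ?thesis using order_M[OF 1 False] by (simp add: less_le)
    qed
  next
    case 2
    then show ?thesis using not_above x y tip by (auto simp: reroute_def)
  next
    case 3
    have "Inl ` W x \<subset> reroute M l C r W y \<longleftrightarrow> W x \<subseteq> set C"
      using tip[OF 3(2)] 3 by (auto simp: set_extend_path reroute_def)
    then show ?thesis using below x y 3 by (simp add: reroute_def)
  next
    case 4
    then show ?thesis using rel[OF x y] by (auto simp: inj_image_subset_iff reroute_def)
  qed
qed

lemma cpt_rep_reroute:
  fixes l r :: "'a \<Rightarrow> nat"
  assumes cr: "cpt_rep X lt V E W"
    and C: "is_path E C" "set C \<subseteq> V" "hd C = a" "last C = c"
    and lr: "\<And>m. m \<in> M \<Longrightarrow> l m \<in> {1..n} \<and> r m \<in> {1..n}" "inj_on l M" "inj_on r M"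
    and order_M: "\<And>m m'. m \<in> M \<Longrightarrow> m' \<in> M \<Longrightarrow> m \<noteq> m' \<Longrightarrow> lt m m' \<longleftrightarrow> l m < l m' \<and> r m < r m'"
    and not_above: "\<And>z m. z \<in> X - M \<Longrightarrow> m \<in> M \<Longrightarrow> \<not> lt m z"
    and below: "\<And>z m. z \<in> X - M \<Longrightarrow> m \<in> M \<Longrightarrow> lt z m \<longleftrightarrow> W z \<subseteq> set C"
  shows "cpt_rep X lt (pendant_vertices V n) (pendant_edges E a c n) (reroute M l C r W)"
proof -
  have t: "tree V E" using cr by (simp add: cpt_rep_def)
  have "a \<in> V" "c \<in> V" using C is_path_nonempty[OF C(1)] by auto
  show ?thesis
    unfolding cpt_rep_def
  proof (intro conjI ballI)
    show "tree (pendant_vertices V n) (pendant_edges E a c n)"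
      using tree_pendant[OF t \<open>a \<in> V\<close> \<open>c \<in> V\<close>] .
  next
    fix x assume "x \<in> X"
    then show "tree_path (pendant_vertices V n) (pendant_edges E a c n) (reroute M l C r W x)"
      by (rule tree_path_reroute[OF cr _ C lr(1)])
  next
    fix x y assume "x \<in> X" "y \<in> X"
    then show "lt x y \<longleftrightarrow> reroute M l C r W x \<subset> reroute M l C r W y"
      by (rule reroute_psubset_iff[OF cr _ _ lr order_M not_above below])
  qed
qed

section \<open>Strong modules\<close>

lemma poset_irrefl: "poset X lt \<Longrightarrow> x \<in> X \<Longrightarrow> \<not> lt x x"
  by (simp add: poset_def)

lemma poset_trans: "poset X lt \<Longrightarrow> lt x y \<Longrightarrow> lt y z \<Longrightarrow> x \<in> X \<Longrightarrow> y \<in> X \<Longrightarrow> z \<in> X \<Longrightarrow> lt x z"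
  unfolding poset_def by blast

lemma poset_has_maximal:
  assumes po: "poset X lt" and S: "S \<subseteq> X" "S \<noteq> {}"
  obtains m where "m \<in> S" "\<forall>y\<in>S. \<not> lt m y"
proof -
  have "finite S" using po S finite_subset unfolding poset_def by blast
  then have "\<exists>m\<in>S. \<forall>y\<in>S. \<not> lt m y" using S(2,1)
  proof (induction S rule: finite_ne_induct)
    case (singleton x)
    then show ?case using poset_irrefl[OF po] by simp
  next
    case (insert x F)
    then obtain m where m: "m \<in> F" "\<forall>y\<in>F. \<not> lt m y" by blast
    show ?case
    proof (cases "lt m x")
      case True
      have "\<not> lt x y" if y: "y \<in> insert x F" for y
      proof
        assume "lt x y"
        then show False
          using y True m poset_irrefl[OF po] poset_trans[OF po True] insert.prems by auto
      qed
      then show ?thesis by blast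
    next
      case False
      then show ?thesis using m by blast
    qed
  qed
  then show ?thesis using that by blast
qed

definition strictly_between :: "'a set \<Rightarrow> ('a \<Rightarrow> 'a \<Rightarrow> bool) \<Rightarrow> 'a set \<Rightarrow> 'a set" where
  "strictly_between X lt M = {y \<in> X - M. (\<exists>m\<in>M. lt m y) \<and> (\<exists>m\<in>M. lt y m)}"

lemma module_comparable:
  "module X lt M \<Longrightarrow> y \<in> X - M \<Longrightarrow> m \<in> M \<Longrightarrow> comparable lt y m \<Longrightarrow> m' \<in> M \<Longrightarrow> comparable lt y m'"
  unfolding module_def by blast

lemma strictly_between_comparable:
  assumes mod: "module X lt M" and y: "y \<in> strictly_between X lt M" and m: "m \<in> M"
  shows "comparable lt y m"
proof -
  obtain m' where "m' \<in> M" "lt m' y" "y \<in> X - M" using y unfolding strictly_between_def by blast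
  then show ?thesis using module_comparable[OF mod _ _ _ m] by (auto simp: comparable_def)
qed

lemma module_strictly_between_outside:
  assumes po: "poset X lt" and mod: "module X lt M" and unbounded: "\<not> (\<exists>y\<in>X. \<forall>m\<in>M. lt m y)"
    and w: "w \<in> X - M" "w \<notin> strictly_between X lt M"
  shows "(\<forall>n\<in>M \<union> strictly_between X lt M. comparable lt w n)
    \<or> (\<forall>n\<in>M \<union> strictly_between X lt M. \<not> comparable lt w n)"
proof -
  let ?A = "strictly_between X lt M"
  have MX: "M \<subseteq> X" and AX: "?A \<subseteq> X" using mod by (auto simp: module_def strictly_between_def)
  consider "\<forall>m\<in>M. comparable lt w m" | "\<forall>m\<in>M. \<not> comparable lt w m"
    using mod w unfolding module_def by blast
  then show ?thesis
  proof cases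
    case 1
    obtain m1 where "m1 \<in> M" "\<not> lt m1 w" using unbounded w by blast
    then have "lt w m1" using 1 unfolding comparable_def by blast
    then have "\<not> lt m w" if "m \<in> M" for m
      using w that \<open>m1 \<in> M\<close> unfolding strictly_between_def by blast
    then have below_M: "lt w m" if "m \<in> M" for m using 1 that unfolding comparable_def by blast
    have "lt w y" if y: "y \<in> ?A" for y
    proof -
      obtain m where "m \<in> M" "lt m y" using y unfolding strictly_between_def by blast
      then show ?thesis using poset_trans[OF po below_M] MX AX w y by blast
    qed
    then show ?thesis using below_M unfolding comparable_def by blast
  next
    case 2
    have "\<not> comparable lt w y" if y: "y \<in> ?A" for y
    proof
      obtain m m' where m: "m \<in> M" "lt m y" "m' \<in> M" "lt y m'"
        using y unfolding strictly_between_def by blast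
      assume "comparable lt w y"
      then have "lt w m' \<or> lt m w"
        using poset_trans[OF po _ m(4)] poset_trans[OF po m(2)] m MX AX w y
        unfolding comparable_def by blast
      then show False using 2 m unfolding comparable_def by blast
    qed
    then show ?thesis using 2 by blast
  qed
qed

lemma module_strictly_between:
  assumes po: "poset X lt" and mod: "module X lt M" and unbounded: "\<not> (\<exists>y\<in>X. \<forall>m\<in>M. lt m y)"
  defines "A \<equiv> strictly_between X lt M"
  shows "module X lt (A \<union> {m \<in> M. \<exists>y\<in>A. lt m y})" (is "module X lt ?N")
proof -
  have MX: "M \<subseteq> X" and AX: "A \<subseteq> X - M" using mod by (auto simp: module_def A_def strictly_between_def)
  have "(\<forall>n\<in>?N. comparable lt w n) \<or> (\<forall>n\<in>?N. \<not> comparable lt w n)" if w: "w \<in> X - ?N" for w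
  proof (cases "w \<in> M")
    case True
    then have above_A: "lt y w" if "y \<in> A" for y
      using strictly_between_comparable[OF mod] that w unfolding A_def comparable_def by blast
    have "lt n w" if n: "n \<in> ?N" for n
    proof (cases "n \<in> A")
      case False
      then obtain y where "n \<in> M" "y \<in> A" "lt n y" using n by blast
      then show ?thesis using poset_trans[OF po _ above_A] MX AX w by blast
    qed (use above_A in blast)
    then show ?thesis unfolding comparable_def by blast
  next
    case False
    then have "(\<forall>n\<in>M \<union> A. comparable lt w n) \<or> (\<forall>n\<in>M \<union> A. \<not> comparable lt w n)"
      using module_strictly_between_outside[OF po mod unbounded] w unfolding A_def by blast
    then show ?thesis by blast
  qed
  moreover have "?N \<subseteq> X" using MX AX by blast
  ultimately show ?thesis unfolding module_def by blast
qed

lemma strong_module_strictly_between: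
  assumes po: "poset X lt" and sm: "strong_module X lt M" and unbounded: "\<not> (\<exists>y\<in>X. \<forall>m\<in>M. lt m y)"
  shows "strictly_between X lt M = {}"
proof (rule ccontr)
  let ?A = "strictly_between X lt M"
  let ?N = "?A \<union> {m \<in> M. \<exists>y\<in>?A. lt m y}"
  assume "?A \<noteq> {}"
  then obtain z m where z: "z \<in> ?A" "m \<in> M" "lt m z" unfolding strictly_between_def by blast
  have mod: "module X lt M" using sm by (simp add: strong_module_def)
  have MX: "M \<subseteq> X" and AX: "?A \<subseteq> X - M" using mod by (auto simp: module_def strictly_between_def)
  obtain mx where mx: "mx \<in> M" "\<forall>y\<in>M. \<not> lt mx y" using poset_has_maximal[OF po MX] z by blast
  \<comment> \<open>the module N then overlaps M without either containing the other\<close>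
  have "mx \<notin> ?N"
  proof
    assume "mx \<in> ?N"
    then obtain y m' where "y \<in> ?A" "lt mx y" "m' \<in> M" "lt y m'"
      using mx AX unfolding strictly_between_def by blast
    then show False using poset_trans[OF po] mx MX AX by blast
  qed
  moreover have "m \<in> M \<inter> ?N" "z \<in> ?N - M" using z AX by auto
  moreover have "module X lt ?N" using module_strictly_between[OF po mod unbounded] .
  ultimately show False using sm mx(1) unfolding strong_module_def by blast
qed

lemma strong_module_nothing_above:
  assumes po: "poset X lt" and sm: "strong_module X lt M" and unbounded: "\<not> (\<exists>y\<in>X. \<forall>m\<in>M. lt m y)"
    and z: "z \<in> X - M" and m: "m \<in> M"
  shows "\<not> lt m z"
proof
  assume mz: "lt m z"
  have mod: "module X lt M" using sm by (simp add: strong_module_def)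
  obtain m' where m': "m' \<in> M" "\<not> lt m' z" using unbounded z by blast
  moreover have "comparable lt z m'"
    using module_comparable[OF mod z m _ m'(1)] mz by (simp add: comparable_def)
  ultimately have "z \<in> strictly_between X lt M"
    using z m mz unfolding strictly_between_def comparable_def by blast
  then show False using strong_module_strictly_between[OF po sm unbounded] by blast
qed

lemma cpt_rep_equal_paths_module:
  assumes cr: "cpt_rep X lt V E W" and xy: "x \<in> X" "y \<in> X" and eq: "W x = W y"
  shows "module X lt {x, y}"
proof -
  have "lt w x \<longleftrightarrow> lt w y" "lt x w \<longleftrightarrow> lt y w" if "w \<in> X" for w
    using cr xy eq that unfolding cpt_rep_def by auto
  then show ?thesis using xy unfolding module_def comparable_def by auto
qed

text \<open>Two distinct elements of M are needed: they rule out, via cpt_rep_equal_paths_module, an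
  element outside M with the same path as an element of M.\<close>

lemma strong_module_below_iff:
  assumes po: "poset X lt" and sm: "strong_module X lt M" and unbounded: "\<not> (\<exists>y\<in>X. \<forall>m\<in>M. lt m y)"
    and cr: "cpt_rep X lt V E W" and two: "m1 \<in> M" "m2 \<in> M" "m1 \<noteq> m2"
    and z: "z \<in> X - M" and m: "m \<in> M"
  shows "lt z m \<longleftrightarrow> W z \<subseteq> (\<Inter>m'\<in>M. W m')"
proof -
  have mod: "module X lt M" using sm by (simp add: strong_module_def)
  then have MX: "M \<subseteq> X" by (simp add: module_def)
  have rel: "\<And>x y. x \<in> X \<Longrightarrow> y \<in> X \<Longrightarrow> lt x y \<longleftrightarrow> W x \<subset> W y" using cr by (simp add: cpt_rep_def)
  show ?thesis
  proof
    assume zm: "lt z m"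
    have "lt z m'" if m': "m' \<in> M" for m'
      using module_comparable[OF mod z m _ m'] zm
        strong_module_nothing_above[OF po sm unbounded z m'] by (auto simp: comparable_def)
    then show "W z \<subseteq> (\<Inter>m'\<in>M. W m')" using rel z MX by blast
  next
    assume "W z \<subseteq> (\<Inter>m'\<in>M. W m')"
    then have "W z \<subseteq> W m" using m by blast
    moreover have "W z \<noteq> W m"
    proof
      assume "W z = W m"
      then have "module X lt {z, m}" using cpt_rep_equal_paths_module[OF cr] z m MX by blast
      then show False using sm z m two unfolding strong_module_def by blast
    qed
    ultimately show "lt z m" using rel z m MX by blast
  qed
qed

section \<open>The prefix order has dimension two\<close>

lemma list_less_append_Cons: "(xs :: 'a :: linorder list) < xs @ y # ys"
  by (induction xs) auto

lemma list_less_common_prefix: "(x :: 'a :: linorder) \<noteq> y \<Longrightarrow> p @ x # q < p @ y # r \<longleftrightarrow> x < y"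
  by (induction p) auto

lemma strict_prefix_iff_lex_less_both:
  fixes g :: "'v \<Rightarrow> int" and i j :: int
  assumes inj: "inj_on g (set xs \<union> set ys)" and ij: "i \<noteq> j"
  shows "(map g xs, i) < (map g ys, j) \<and> (map (\<lambda>v. - g v) xs, - i) < (map (\<lambda>v. - g v) ys, - j)
     \<longleftrightarrow> strict_prefix xs ys"
proof -
  consider "xs = ys" | "strict_prefix xs ys" | "strict_prefix ys xs" | "xs \<parallel> ys"
    unfolding parallel_def strict_prefix_def by blast
  then show ?thesis
  proof cases
    case 1
    then show ?thesis using ij by (auto simp: less_prod_def)
  next
    case 2
    then obtain y zs where "ys = xs @ y # zs" by (metis strict_prefixE')
    then show ?thesis using 2 by (simp add: less_prod_def list_less_append_Cons)
  next
    case 3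
    then obtain y zs where "xs = ys @ y # zs" by (metis strict_prefixE')
    then have "map g ys < map g xs" by (simp add: list_less_append_Cons)
    then show ?thesis using 3 by (auto simp: less_prod_def)
  next
    case 4
    then obtain as b bs c cs where d: "b \<noteq> c" "xs = as @ b # bs" "ys = as @ c # cs"
      using parallel_decomp by blast
    have "g b \<noteq> g c" using inj d by (auto simp: inj_on_def)
    then have "map g xs < map g ys \<longleftrightarrow> g b < g c"
      "map (\<lambda>v. - g v) xs < map (\<lambda>v. - g v) ys \<longleftrightarrow> - g b < - g c"
      "map g xs \<noteq> map g ys" "map (\<lambda>v. - g v) xs \<noteq> map (\<lambda>v. - g v) ys"
      using d by (simp_all add: list_less_common_prefix)
    moreover have "\<not> strict_prefix xs ys" using 4 by (auto simp: parallel_def)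
    ultimately show ?thesis by (auto simp: less_prod_def)
  qed
qed

definition rank_in :: "('a \<Rightarrow> 'k :: linorder) \<Rightarrow> 'a set \<Rightarrow> 'a \<Rightarrow> nat" where
  "rank_in k S x = card {y \<in> S. k y < k x}"

lemma rank_in_less_iff:
  assumes "finite S" "x \<in> S" "y \<in> S"
  shows "rank_in k S x < rank_in k S y \<longleftrightarrow> k x < k y"
proof
  assume "k x < k y"
  then have "{z \<in> S. k z < k x} \<subset> {z \<in> S. k z < k y}" using assms by auto
  then show "rank_in k S x < rank_in k S y" unfolding rank_in_def using assms by (simp add: psubset_card_mono)
next
  assume "rank_in k S x < rank_in k S y"
  moreover have "\<not> k x < k y \<Longrightarrow> rank_in k S y \<le> rank_in k S x"
    unfolding rank_in_def using assms by (intro card_mono) auto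
  ultimately show "k x < k y" by linarith
qed

lemma inj_on_rank_in: "finite S \<Longrightarrow> inj_on k S \<Longrightarrow> inj_on (rank_in k S) S"
  by (rule inj_onI) (metis rank_in_less_iff inj_on_def less_irrefl linorder_neqE)

lemma rank_in_less_card: "finite S \<Longrightarrow> x \<in> S \<Longrightarrow> rank_in k S x < card S"
  unfolding rank_in_def by (rule psubset_card_mono) auto

lemma strict_prefix_two_dimensional:
  fixes L :: "'a \<Rightarrow> 'v list"
  assumes M: "finite M" and vertices: "finite (\<Union>m\<in>M. set (L m))"
  obtains l r :: "'a \<Rightarrow> nat"
  where "\<And>m. m \<in> M \<Longrightarrow> l m \<in> {1..card M} \<and> r m \<in> {1..card M}" "inj_on l M" "inj_on r M"
    "\<And>m m'. m \<in> M \<Longrightarrow> m' \<in> M \<Longrightarrow> m \<noteq> m' \<Longrightarrow>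
       strict_prefix (L m) (L m') \<longleftrightarrow> l m < l m' \<and> r m < r m'"
proof -
  obtain f :: "'v \<Rightarrow> nat" where f: "inj_on f (\<Union>m\<in>M. set (L m))"
    using finite_imp_inj_to_nat_seg[OF vertices] by metis
  obtain idx :: "'a \<Rightarrow> nat" where idx: "inj_on idx M"
    using finite_imp_inj_to_nat_seg[OF M] by metis
  define g where "g v = int (f v)" for v
  define key1 where "key1 m = (map g (L m), int (idx m))" for m
  define key2 where "key2 m = (map (\<lambda>v. - g v) (L m), - int (idx m))" for m
  have "inj_on key1 M" "inj_on key2 M" using idx by (auto simp: inj_on_def key1_def key2_def)
  then have "inj_on (rank_in key1 M) M" "inj_on (rank_in key2 M) M" using inj_on_rank_in[OF M] by blast+
  then have inj: "inj_on (\<lambda>m. Suc (rank_in key1 M m)) M" "inj_on (\<lambda>m. Suc (rank_in key2 M m)) M"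
    by (auto simp: inj_on_def)
  show ?thesis
  proof (rule that[OF _ inj])
    fix m assume "m \<in> M"
    then show "Suc (rank_in key1 M m) \<in> {1..card M} \<and> Suc (rank_in key2 M m) \<in> {1..card M}"
      using rank_in_less_card[OF M, of m key1] rank_in_less_card[OF M, of m key2] by simp
  next
    fix m m' assume m: "m \<in> M" "m' \<in> M" "m \<noteq> m'"
    have "inj_on g (set (L m) \<union> set (L m'))"
      using f m unfolding g_def by (auto simp: inj_on_def)
    moreover have "int (idx m) \<noteq> int (idx m')" using idx m by (auto simp: inj_on_def)
    ultimately show "strict_prefix (L m) (L m') \<longleftrightarrow>
        Suc (rank_in key1 M m) < Suc (rank_in key1 M m') \<and> Suc (rank_in key2 M m) < Suc (rank_in key2 M m')"
      using strict_prefix_iff_lex_less_both[of g "L m" "L m'" "int (idx m)" "int (idx m')"]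
        rank_in_less_iff[OF M m(1,2), of key1] rank_in_less_iff[OF M m(1,2), of key2]
      unfolding key1_def key2_def by simp
  qed
qed

section \<open>Separating the endpoints\<close>

lemma endpoint_paths_from:
  assumes t: "tree V E" and ep: "\<forall>m\<in>M. endpoint E a (W m)"
  obtains L where "\<And>m. m \<in> M \<Longrightarrow> is_path E (L m) \<and> set (L m) = W m \<and> hd (L m) = a"
proof -
  have "\<forall>m\<in>M. \<exists>xs. is_path E xs \<and> set xs = W m \<and> hd xs = a"
    using endpoint_path_from[OF t] ep by metis
  then show ?thesis using that by metis
qed

lemma cpt_rep_paths_from_two_dimensional:
  assumes cr: "cpt_rep X lt V E W" and M: "M \<subseteq> X" "finite M"
    and L: "\<And>m. m \<in> M \<Longrightarrow> is_path E (L m) \<and> set (L m) = W m \<and> hd (L m) = a"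
  obtains l r :: "'a \<Rightarrow> nat"
  where "\<And>m. m \<in> M \<Longrightarrow> l m \<in> {1..card M} \<and> r m \<in> {1..card M}" "inj_on l M" "inj_on r M"
    "\<And>m m'. m \<in> M \<Longrightarrow> m' \<in> M \<Longrightarrow> m \<noteq> m' \<Longrightarrow> lt m m' \<longleftrightarrow> l m < l m' \<and> r m < r m'"
proof -
  have t: "tree V E" using cr by (simp add: cpt_rep_def)
  have LV: "set (L m) \<subseteq> V" if "m \<in> M" for m
    using cr L[OF that] that M unfolding cpt_rep_def tree_path_def by blast
  then have "(\<Union>m\<in>M. set (L m)) \<subseteq> V" by blast
  then have "finite (\<Union>m\<in>M. set (L m))" using t finite_subset by (auto simp: tree_def)
  then obtain l r where lr: "\<And>m. m \<in> M \<Longrightarrow> l m \<in> {1..card M} \<and> r m \<in> {1..card M}"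
      "inj_on l M" "inj_on r M"
    and prefix: "\<And>m m'. m \<in> M \<Longrightarrow> m' \<in> M \<Longrightarrow> m \<noteq> m' \<Longrightarrow>
       strict_prefix (L m) (L m') \<longleftrightarrow> l m < l m' \<and> r m < r m'"
    using strict_prefix_two_dimensional[OF M(2)] by blast
  have "lt m m' \<longleftrightarrow> l m < l m' \<and> r m < r m'" if m: "m \<in> M" "m' \<in> M" "m \<noteq> m'" for m m'
  proof -
    have "lt m m' \<longleftrightarrow> W m \<subset> W m'" using cr m M unfolding cpt_rep_def by blast
    also have "\<dots> \<longleftrightarrow> strict_prefix (L m) (L m')"
      using tree_strict_prefix_iff_psubset[OF t _ _ LV[OF m(1)] LV[OF m(2)]] L[OF m(1)] L[OF m(2)]
      by simp
    finally show ?thesis using prefix[OF m] by simp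
  qed
  then show ?thesis using that lr by blast
qed

lemma strong_module_separating_rep:
  assumes po: "poset X lt" and sm: "strong_module X lt M" and unbounded: "\<not> (\<exists>y\<in>X. \<forall>m\<in>M. lt m y)"
    and cr: "cpt_rep X lt V E W" and ep: "\<forall>m\<in>M. endpoint E (a :: 'v) (W m)"
    and two: "m1 \<in> M" "m2 \<in> M" "m1 \<noteq> m2"
  obtains V' :: "('v + bool \<times> nat) set" and E' W' where "cpt_rep X lt V' E' W'"
    "\<And>m m' v. m \<in> M \<Longrightarrow> m' \<in> M \<Longrightarrow> m \<noteq> m' \<Longrightarrow> \<not> (endpoint E' v (W' m) \<and> endpoint E' v (W' m'))"
proof -
  have t: "tree V E" using cr by (simp add: cpt_rep_def)
  have MX: "M \<subseteq> X" using sm by (simp add: strong_module_def module_def)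
  have finM: "finite M" using po MX finite_subset by (auto simp: poset_def)
  obtain L where L: "\<And>m. m \<in> M \<Longrightarrow> is_path E (L m) \<and> set (L m) = W m \<and> hd (L m) = a"
    using endpoint_paths_from[OF t ep] by blast
  have LV: "set (L m) \<subseteq> V" if "m \<in> M" for m
    using cr L[OF that] that MX unfolding cpt_rep_def tree_path_def by blast
  obtain C where C: "is_path E C" "hd C = a" "set C = (\<Inter>m\<in>M. W m)"
    using tree_Inter_paths_from[OF t two(1), of L a] L LV by auto
  have CV: "set C \<subseteq> V" using C(3) LV[OF two(1)] L[OF two(1)] two(1) by blast
  obtain l r where lr: "\<And>m. m \<in> M \<Longrightarrow> l m \<in> {1..card M} \<and> r m \<in> {1..card M}"
      "inj_on l M" "inj_on r M"
    and order_M: "\<And>m m'. m \<in> M \<Longrightarrow> m' \<in> M \<Longrightarrow> m \<noteq> m' \<Longrightarrow> lt m m' \<longleftrightarrow> l m < l m' \<and> r m < r m'"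
    using cpt_rep_paths_from_two_dimensional[OF cr MX finM L] by blast
  have below: "lt z m \<longleftrightarrow> W z \<subseteq> set C" if "z \<in> X - M" "m \<in> M" for z m
    using strong_module_below_iff[OF po sm unbounded cr two that] C(3) by simp
  show ?thesis
  proof (rule that)
    show "cpt_rep X lt (pendant_vertices V (card M)) (pendant_edges E a (last C) (card M))
        (reroute M l C r W)"
      by (rule cpt_rep_reroute[OF cr C(1) CV C(2) refl lr order_M
            strong_module_nothing_above[OF po sm unbounded] below])
  next
    fix m m' v assume m: "m \<in> M" "m' \<in> M" "m \<noteq> m'"
    then have ne: "l m \<noteq> l m'" "r m \<noteq> r m'" using lr(2,3) by (auto dest: inj_onD)
    have "l m \<in> {1..card M}" "r m \<in> {1..card M}" "l m' \<in> {1..card M}" "r m' \<in> {1..card M}"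
      using lr(1) m by auto
    then show "\<not> (endpoint (pendant_edges E a (last C) (card M)) v (reroute M l C r W m) \<and>
        endpoint (pendant_edges E a (last C) (card M)) v (reroute M l C r W m'))"
      using extend_path_no_common_endpoint[OF t C(1) CV C(2) refl _ _ _ _ ne] m
      by (simp add: reroute_def)
  qed
qed

theorem mainTheorem10:
  fixes X :: "'a set" and lt :: "'a \<Rightarrow> 'a \<Rightarrow> bool" and M :: "'a set"
    and V :: "'v set" and E :: "'v \<Rightarrow> 'v \<Rightarrow> bool" and W :: "'a \<Rightarrow> 'v set" and a :: 'v
  assumes "poset X lt"
    and "dually_CPT X lt"
    and "strong_module X lt M"
    and "cpt_rep X lt V E W"
    and "\<forall>m\<in>M. endpoint E a (W m)"
    and "\<not> (\<exists>y\<in>X. \<forall>m\<in>M. lt m y)"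
  shows "\<exists>(V' :: nat set) E' W'. cpt_rep X lt V' E' W' \<and>
           (\<forall>m\<in>M. \<forall>m'\<in>M. m \<noteq> m' \<longrightarrow>
              (\<forall>v. endpoint E' v (W' m) \<longrightarrow> \<not> endpoint E' v (W' m')))"
proof (cases "\<exists>m1\<in>M. \<exists>m2\<in>M. m1 \<noteq> m2")
  case False
  obtain V' :: "nat set" and E' W' where "cpt_rep X lt V' E' W'"
    using cpt_rep_relabel_nat[OF assms(4)] by metis
  then show ?thesis using False by blast
next
  case True
  then obtain m1 m2 where two: "m1 \<in> M" "m2 \<in> M" "m1 \<noteq> m2" by blast
  obtain V1 :: "('v + bool \<times> nat) set" and E1 W1 where rep: "cpt_rep X lt V1 E1 W1"
    and separated: "\<And>m m' v. m \<in> M \<Longrightarrow> m' \<in> M \<Longrightarrow> m \<noteq> m' \<Longrightarrow>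
      \<not> (endpoint E1 v (W1 m) \<and> endpoint E1 v (W1 m'))"
    using strong_module_separating_rep[OF assms(1,3,6,4,5) two] by blast
  obtain V' :: "nat set" and E' W' where rep': "cpt_rep X lt V' E' W'"
    and shared: "\<And>x y v. x \<in> X \<Longrightarrow> y \<in> X \<Longrightarrow> endpoint E' v (W' x) \<Longrightarrow> endpoint E' v (W' y) \<Longrightarrow>
       \<exists>u. endpoint E1 u (W1 x) \<and> endpoint E1 u (W1 y)"
    using cpt_rep_relabel_nat[OF rep] by blast
  have "M \<subseteq> X" using assms(3) by (simp add: strong_module_def module_def)
  then have "\<not> (endpoint E' v (W' m) \<and> endpoint E' v (W' m'))"
    if "m \<in> M" "m' \<in> M" "m \<noteq> m'" for m m' v
    using shared[of m m' v] separated[OF that] that by blast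
  then show ?thesis using rep' by blast
qed

end
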